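(* Let $q=(q_1,\ldots,q_n)$ be a sequence of positive integers, set $Q:=1+q_1+\cdots+q_n$, and define \[ T_q:=\{\,b\in\{1,\ldots,Q-1\} \;:\; Q\nmid q_i b \text{ for all } i\in\{1,\ldots,n\}\,\}. \] Then the local $h^\ast$-polynomial of the $n$-simplex $\Delta_{(1,q)}$ is \[ \ell^\ast(\Delta_{(1,q)};z)=\sum_{b\in T_q} z^{\omega(b)},\qquad \text{where}\quad \omega(b)=b-\sum_{i=1}^n\left\lfloor \frac{q_i b}{Q}\right\rfloor . \]
   Context: Let $e^{(1)},\ldots,e^{(n)}$ be the standard basis of $\mathbb{R}^n$. For a vector $q=(q_1,\ldots,q_n)$ of positive integers, $\Delta_{(1,q)}:=\operatorname{conv}\bigl(e^{(1)},\ldots,e^{(n)},-\sum_{i=1}^n q_ie^{(i)}\bigr)\subset\mathbb{R}^n$; it is a lattice $n$-simplex. For a lattice $d$-simplex $\Delta=\operatorname{conv}(v^{(0)},\ldots,v^{(d)})\subset\mathbb{R}^n$, its open parallelepiped is $\Pi^\circ_\Delta:=\{\sum_{i=0}^d\lambda_i(v^{(i)},1)\in\mathbb{R}^{n+1} : 0<\lambda_i<1 \text{ for all } i\}$, and its local $h^\ast$-polynomial (box polynomial) is $\ell^\ast(\Delta;z):=\sum_{x=(x_1,\ldots,x_{n+1})\in\Pi^\circ_\Delta\cap\mathbb{Z}^{n+1}} z^{x_{n+1}}$. *)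

theory Defs
  imports Complex_Main "HOL-Computational_Algebra.Polynomial"
begin

text \<open>Points of R^n and Z^n are modelled as functions nat => real / nat => int,
  coordinates 0..n-1 (coordinate i-1 is the i-th standard coordinate).
  A lattice simplex is given by its list of vertices (lattice points of Z^n).\<close>

definition open_parallelepiped :: "nat \<Rightarrow> (nat \<Rightarrow> int) list \<Rightarrow> (nat \<Rightarrow> real) set" where
  "open_parallelepiped n vs =
     {x. \<exists>lam :: nat \<Rightarrow> real.
           (\<forall>i<length vs. 0 < lam i \<and> lam i < 1) \<and>
           (\<forall>j<n. x j = (\<Sum>i<length vs. lam i * real_of_int ((vs ! i) j))) \<and>
           x n = (\<Sum>i<length vs. lam i) \<and>
           (\<forall>j>n. x j = 0)}"

definition box_lattice_points :: "nat \<Rightarrow> (nat \<Rightarrow> int) list \<Rightarrow> (nat \<Rightarrow> int) set" where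
  "box_lattice_points n vs = {x. (\<lambda>j. real_of_int (x j)) \<in> open_parallelepiped n vs}"

definition local_hstar :: "nat \<Rightarrow> (nat \<Rightarrow> int) list \<Rightarrow> int poly" where
  "local_hstar n vs = (\<Sum>x\<in>box_lattice_points n vs. monom 1 (nat (x n)))"

definition delta_1q_vertices :: "nat list \<Rightarrow> (nat \<Rightarrow> int) list" where
  "delta_1q_vertices q =
     map (\<lambda>i. (\<lambda>j. if j = i then 1 else 0)) [0..<length q] @
     [(\<lambda>j. if j < length q then - int (q ! j) else 0)]"

definition Qsum :: "nat list \<Rightarrow> nat" where
  "Qsum q = 1 + sum_list q"

definition T_set :: "nat list \<Rightarrow> nat set" where
  "T_set q = {b \<in> {1..Qsum q - 1}. \<forall>i<length q. \<not> Qsum q dvd q ! i * b}"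

definition omega :: "nat list \<Rightarrow> nat \<Rightarrow> int" where
  "omega q b = int b - (\<Sum>i<length q. \<lfloor>real (q ! i * b) / real (Qsum q)\<rfloor>)"

end

theory Submission
  imports Defs
begin

text \<open>A point of the open parallelepiped is \<open>\<Sum> \<lambda>\<^sub>i (v\<^sub>i, 1)\<close> with \<open>0 < \<lambda>\<^sub>i < 1\<close>, and the
  coefficient \<open>t\<close> of the last vertex determines all others: \<open>\<lambda>\<^sub>j = x\<^sub>j + t q\<^sub>j\<close>, and the
  height is \<open>\<Sum> x\<^sub>j + t Q\<close>. Integrality of the height forces \<open>t = b/Q\<close> for an integer
  \<open>0 < b < Q\<close>, and \<open>0 < x\<^sub>j + q\<^sub>j b/Q < 1\<close> forces \<open>x\<^sub>j = -\<lfloor>q\<^sub>j b/Q\<rfloor>\<close> with \<open>q\<^sub>j b/Q\<close> not an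
  integer. So the lattice points of the box correspond bijectively to \<open>T\<^sub>q\<close>, the point
  attached to \<open>b\<close> having height \<open>b - \<Sum> \<lfloor>q\<^sub>j b/Q\<rfloor> = \<omega>(b)\<close>.\<close>

lemma of_nat_divide_in_Ints_iff:
  assumes "0 < d"
  shows "real m / real d \<in> \<int> \<longleftrightarrow> d dvd m"
proof
  assume "real m / real d \<in> \<int>"
  then obtain k where "real m / real d = of_int k" by (elim Ints_cases)
  then have "real m = real d * of_int k" using assms by (simp add: field_simps)
  then have "int m = int d * k" by (metis of_int_eq_iff of_int_mult of_int_of_nat_eq)
  then show "d dvd m" by (metis dvd_triv_left int_dvd_int_iff)
next
  assume "d dvd m"
  then obtain k where "m = d * k" ..
  then show "real m / real d \<in> \<int>" using assms by simp
qed

lemma shifted_in_open_unit_interval_iff: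
  fixes y :: real
  shows "0 < of_int x + y \<and> of_int x + y < 1 \<longleftrightarrow> y \<notin> \<int> \<and> x = - \<lfloor>y\<rfloor>"
proof
  assume x: "0 < of_int x + y \<and> of_int x + y < 1"
  have "y \<notin> \<int>"
  proof
    assume "y \<in> \<int>"
    then obtain m where "y = of_int m" by (elim Ints_cases)
    with x have "0 < x + m" "x + m < 1" by linarith+
    then show False by linarith
  qed
  moreover have "\<lfloor>of_int x + y\<rfloor> = 0" using x by (intro floor_unique) simp_all
  then have "x = - \<lfloor>y\<rfloor>" by simp
  ultimately show "y \<notin> \<int> \<and> x = - \<lfloor>y\<rfloor>" by blast
next
  assume y: "y \<notin> \<int> \<and> x = - \<lfloor>y\<rfloor>"
  then have "of_int x + y = frac y" by (simp add: frac_def)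
  moreover have "frac y \<noteq> 0" using y by simp
  ultimately show "0 < of_int x + y \<and> of_int x + y < 1"
    using frac_ge_0[of y] frac_lt_1[of y] by linarith
qed

lemma Qsum_pos [simp]: "0 < Qsum q"
  by (simp add: Qsum_def)

lemma of_nat_Qsum: "real (Qsum q) = 1 + (\<Sum>i<length q. real (q ! i))"
  by (simp add: Qsum_def sum_list_sum_nth atLeast0LessThan)

lemma length_delta_1q_vertices: "length (delta_1q_vertices q) = Suc (length q)"
  by (simp add: delta_1q_vertices_def)

lemma delta_1q_vertices_combination:
  assumes "j < length q"
  shows "(\<Sum>i<Suc (length q). lam i * real_of_int ((delta_1q_vertices q ! i) j))
         = lam j - lam (length q) * real (q ! j)"
proof -
  have "(\<Sum>i<length q. lam i * real_of_int ((delta_1q_vertices q ! i) j))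
        = (\<Sum>i<length q. if i = j then lam i else 0)"
    by (rule sum.cong) (auto simp: delta_1q_vertices_def nth_append)
  then show ?thesis
    using assms by (simp add: delta_1q_vertices_def nth_append)
qed

lemma mem_box_delta_1q_iff:
  "x \<in> box_lattice_points (length q) (delta_1q_vertices q) \<longleftrightarrow>
     (\<exists>t::real. 0 < t \<and> t < 1 \<and>
        (\<forall>j<length q. 0 < of_int (x j) + t * q ! j \<and> of_int (x j) + t * q ! j < 1) \<and>
        of_int (x (length q)) = (\<Sum>j<length q. of_int (x j)) + t * Qsum q \<and>
        (\<forall>j>length q. x j = 0))"
  (is "_ \<longleftrightarrow> (\<exists>t. ?box t)")
proof -
  let ?n = "length q"
  have height: "(\<Sum>i<Suc ?n. lam i) = (\<Sum>j<?n. of_int (x j)) + t * Qsum q"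
    if "\<forall>j<?n. lam j = of_int (x j) + t * q ! j" "lam ?n = t"
    for lam :: "nat \<Rightarrow> real" and t :: real
    using that by (simp add: of_nat_Qsum sum.distrib sum_distrib_left algebra_simps)
  show ?thesis
  proof
    assume "x \<in> box_lattice_points ?n (delta_1q_vertices q)"
    then obtain lam :: "nat \<Rightarrow> real" where lam: "\<forall>i<Suc ?n. 0 < lam i \<and> lam i < 1"
      and coords: "\<forall>j<?n. real_of_int (x j) = lam j - lam ?n * q ! j"
      and "of_int (x ?n) = (\<Sum>i<Suc ?n. lam i)" "\<forall>j>?n. x j = 0"
      unfolding box_lattice_points_def open_parallelepiped_def length_delta_1q_vertices
      by (auto simp del: sum.lessThan_Suc simp add: delta_1q_vertices_combination)
    moreover have "\<forall>j<?n. lam j = of_int (x j) + lam ?n * q ! j" using coords by simp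
    moreover from this
    have "\<forall>j<?n. 0 < of_int (x j) + lam ?n * q ! j \<and> of_int (x j) + lam ?n * q ! j < 1"
      using lam by (metis less_SucI)
    ultimately have "?box (lam ?n)" using height[of lam] by simp
    then show "\<exists>t. ?box t" ..
  next
    assume "\<exists>t. ?box t"
    then obtain t where t: "?box t" ..
    define lam where "lam i = (if i < ?n then of_int (x i) + t * q ! i else t)" for i
    have "\<forall>i<Suc ?n. 0 < lam i \<and> lam i < 1" using t by (auto simp: lam_def less_Suc_eq)
    moreover have "\<forall>j<?n. of_int (x j) = (\<Sum>i<Suc ?n. lam i * of_int ((delta_1q_vertices q ! i) j))"
      by (simp add: delta_1q_vertices_combination lam_def del: sum.lessThan_Suc)
    moreover have "(\<Sum>i<Suc ?n. lam i) = (\<Sum>j<?n. of_int (x j)) + t * Qsum q"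
      by (rule height) (simp_all add: lam_def)
    ultimately show "x \<in> box_lattice_points ?n (delta_1q_vertices q)"
      using t unfolding box_lattice_points_def open_parallelepiped_def length_delta_1q_vertices
      by (intro CollectI exI[of _ lam]) simp
  qed
qed

definition box_point :: "nat list \<Rightarrow> nat \<Rightarrow> nat \<Rightarrow> int" where
  "box_point q b j =
     (if j < length q then - \<lfloor>real (q ! j * b) / real (Qsum q)\<rfloor>
      else if j = length q then omega q b else 0)"

lemma box_point_height:
  "box_point q b (length q) = (\<Sum>j<length q. box_point q b j) + int b"
  by (simp add: box_point_def omega_def sum_negf)

lemma box_point_mem_box_lattice_points:
  assumes "b \<in> T_set q"
  shows "box_point q b \<in> box_lattice_points (length q) (delta_1q_vertices q)"
proof -
  define t where "t = real b / real (Qsum q)"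
  have "0 < b" "b < Qsum q"
    and nondvd: "\<And>j. j < length q \<Longrightarrow> \<not> Qsum q dvd q ! j * b"
    using assms by (auto simp: T_set_def Qsum_def)
  then have "0 < t" "t < 1" by (simp_all add: t_def)
  moreover have
    "0 < of_int (box_point q b j) + t * q ! j \<and> of_int (box_point q b j) + t * q ! j < 1"
    if "j < length q" for j
  proof -
    have y: "t * q ! j = real (q ! j * b) / real (Qsum q)" by (simp add: t_def)
    have "real (q ! j * b) / real (Qsum q) \<notin> \<int>"
      unfolding of_nat_divide_in_Ints_iff[OF Qsum_pos] using nondvd[OF that] .
    then show ?thesis
      unfolding y shifted_in_open_unit_interval_iff using that by (simp add: box_point_def)
  qed
  moreover have "real_of_int (box_point q b (length q))
                   = (\<Sum>j<length q. of_int (box_point q b j)) + t * Qsum q"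
    by (simp add: box_point_height t_def Qsum_def)
  ultimately show ?thesis
    by (auto simp: mem_box_delta_1q_iff box_point_def)
qed

lemma box_lattice_points_delta_1qE:
  assumes "x \<in> box_lattice_points (length q) (delta_1q_vertices q)"
  obtains b where "b \<in> T_set q" and "x = box_point q b"
proof -
  obtain t :: real where "0 < t" "t < 1"
    and coords: "\<forall>j<length q. 0 < of_int (x j) + t * q ! j \<and> of_int (x j) + t * q ! j < 1"
    and height: "of_int (x (length q)) = (\<Sum>j<length q. of_int (x j)) + t * Qsum q"
    and zero: "\<forall>j>length q. x j = 0"
    using assms by (auto simp: mem_box_delta_1q_iff)
  define k where "k = x (length q) - (\<Sum>j<length q. x j)"
  have k: "of_int k = t * Qsum q" using height by (simp add: k_def)
  have "0 < real_of_int k" using k \<open>0 < t\<close> by simp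
  then have "0 < k" by simp
  have "t * real (Qsum q) < 1 * real (Qsum q)"
    using \<open>t < 1\<close> by (intro mult_strict_right_mono) simp_all
  with k have "real_of_int k < real (Qsum q)" by simp
  then have "k < Qsum q" by (metis of_int_less_iff of_int_of_nat_eq)
  define b where "b = nat k"
  have t: "t = real b / real (Qsum q)" using k \<open>0 < k\<close> by (simp add: b_def field_simps)
  have fract:
    "real (q ! j * b) / real (Qsum q) \<notin> \<int> \<and> x j = - \<lfloor>real (q ! j * b) / real (Qsum q)\<rfloor>"
    if "j < length q" for j
  proof -
    have "t * q ! j = real (q ! j * b) / real (Qsum q)" by (simp add: t)
    with coords[rule_format, OF that] show ?thesis
      by (metis shifted_in_open_unit_interval_iff)
  qed
  have "1 \<le> b" "b < Qsum q" using \<open>0 < k\<close> \<open>k < Qsum q\<close> by (simp_all add: b_def nat_less_iff)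
  then have "b \<in> {1..Qsum q - 1}" by simp
  with fract have "b \<in> T_set q"
    unfolding T_set_def of_nat_divide_in_Ints_iff[OF Qsum_pos, symmetric] by blast
  moreover have "x = box_point q b"
  proof
    fix j
    have below: "x i = box_point q b i" if "i < length q" for i
      using fract[OF that] that by (simp add: box_point_def)
    have "(\<Sum>i<length q. x i) = (\<Sum>i<length q. box_point q b i)"
      by (rule sum.cong) (simp_all add: below)
    moreover have "int b = k" using \<open>0 < k\<close> by (simp add: b_def)
    ultimately have "x (length q) = box_point q b (length q)"
      using box_point_height[of q b] unfolding k_def by linarith
    with below zero show "x j = box_point q b j"
      by (cases j "length q" rule: linorder_cases) (simp_all add: box_point_def)
  qed
  ultimately show thesis ..
qed

lemma box_lattice_points_delta_1q:
  "box_lattice_points (length q) (delta_1q_vertices q) = box_point q ` T_set q"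
  using box_point_mem_box_lattice_points box_lattice_points_delta_1qE by blast

lemma inj_on_box_point: "inj_on (box_point q) (T_set q)"
  by (rule inj_onI) (metis box_point_height add_left_cancel of_nat_eq_iff)

theorem theorem2p1:
  fixes q :: "nat list"
  assumes "\<forall>i<length q. 0 < q ! i"
  shows "local_hstar (length q) (delta_1q_vertices q) =
         (\<Sum>b\<in>T_set q. monom 1 (nat (omega q b)))"
proof -
  have "local_hstar (length q) (delta_1q_vertices q)
          = (\<Sum>b\<in>T_set q. monom 1 (nat (box_point q b (length q))))"
    unfolding local_hstar_def box_lattice_points_delta_1q
    by (simp add: sum.reindex[OF inj_on_box_point])
  also have "\<dots> = (\<Sum>b\<in>T_set q. monom 1 (nat (omega q b)))"
    by (simp add: box_point_def)
  finally show ?thesis .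
qed

end
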